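(* Let $k\ge1$, $r=\sqrt[k]{p}$. In multi-level MS with string-based regular sampling using a sampling factor $v=\Theta(kr)=\Theta(k\sqrt[k]{p})$, the number of strings per PE is in $\mathcal{O}(n/p)$ in each level of the algorithm.
   Context: $p$ PEs hold in total $n$ strings, $\Theta(n/p)$ per PE initially. Multi-level MS (with $p=r^k$): each PE sorts its local strings; then on each level $t=1,\dots,k$ the PEs form $r^{t-1}$ groups of $p'=r^{k+1-t}$ consecutive PEs, each group independently sorting the concatenation $S'$ of its PEs' locally sorted arrays $S_i$: $r-1$ splitters $f_1<\dots<f_{r-1}$ are chosen, bucket $B^j=\bigcup_i\{s\in S_i:f_j<s\le f_{j+1}\}$ ($f_0=-\infty,f_r=\infty$) is assigned to the $j$-th subgroup of $p''=p'/r$ PEs such that each PE of that subgroup receives $|B^j|/p''$ strings, and received sequences are merged. String-based regular sampling with factor $v$: with $\omega=|S'|/(p'(v+1))$ (assumed to be an integer), PE $i$ draws $\lceil|S_i|/\omega\rceil-1$ evenly spaced samples from its sorted local array, the first PEs drawing one extra sample if fewer than $p'(v+1)$ samples result; the samples $V$ are sorted globally and $f_j=V[j|V|/r-1]$.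
   Formalization: The n input strings held by the p PEs are assumed pairwise distinct. The paper assumes this as well. *)

theory Defs
  imports Complex_Main "HOL-Library.Multiset"
begin

text \<open>Strings are elements of an arbitrary linear order (only
comparisons are used by the algorithm).  A group of p' PEs is represented by the
list of the local (sorted) arrays of its PEs, in PE order.\<close>

definition ceil_div :: "nat \<Rightarrow> nat \<Rightarrow> nat" where
  "ceil_div a b = (a + b - 1) div b"

text \<open>omega = |S'| / (p' (v+1)); its integrality is required in ms_group_step.\<close>
definition ms_omega :: "'a list list \<Rightarrow> nat \<Rightarrow> nat" where
  "ms_omega Ss v = sum_list (map length Ss) div (length Ss * (v + 1))"

definition base_count :: "'a list list \<Rightarrow> nat \<Rightarrow> nat \<Rightarrow> nat" where
  "base_count Ss v i = ceil_div (length (Ss ! i)) (ms_omega Ss v) - 1"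

definition even_samples :: "'a list \<Rightarrow> nat \<Rightarrow> 'a list" where
  "even_samples xs c = map (\<lambda>j. xs ! ((j * length xs) div (c + 1))) [1..<c + 1]"

definition ms_samples :: "'a::linorder list list \<Rightarrow> nat \<Rightarrow> 'a list" where
  "ms_samples Ss v =
     (let m = length Ss * (v + 1);
          d = m - (\<Sum>i<length Ss. base_count Ss v i)
      in sort (concat (map (\<lambda>i. even_samples (Ss ! i)
                 (base_count Ss v i + (if i < d then 1 else 0))) [0..<length Ss])))"

definition splitter :: "nat \<Rightarrow> 'a list \<Rightarrow> nat \<Rightarrow> 'a" where
  "splitter r V j = V ! ((j * length V) div r - 1)"

text \<open>Bucket B^j (0 <= j < r), with f_0 = -infinity and f_r = +infinity.\<close>
definition bucket :: "nat \<Rightarrow> nat \<Rightarrow> 'a::linorder list list \<Rightarrow> nat \<Rightarrow> 'a list" where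
  "bucket r v Ss j =
     (let V = ms_samples Ss v in
      concat (map (filter (\<lambda>s. (j = 0 \<or> splitter r V j < s) \<and>
                               (j + 1 = r \<or> s \<le> splitter r V (j + 1)))) Ss))"

definition ms_group_step :: "nat \<Rightarrow> nat \<Rightarrow> 'a::linorder list list \<Rightarrow> 'a list list \<Rightarrow> bool" where
  "ms_group_step r v Ss Ss' \<longleftrightarrow>
     (let p' = length Ss; p'' = p' div r in
      length Ss' = p' \<and>
      (p' * (v + 1)) dvd sum_list (map length Ss) \<and>
      (\<forall>j<r. let B = bucket r v Ss j in
         mset (concat (map (\<lambda>q. Ss' ! (j * p'' + q)) [0..<p''])) = mset B \<and>
         (\<forall>q<p''. sorted (Ss' ! (j * p'' + q)) \<and>
             length (Ss' ! (j * p'' + q)) \<in> {length B div p'', ceil_div (length B) p''})))"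

text \<open>A run of k-level MS on p = r^k PEs.  conf t i is the local array of PE i
after level t (conf 0 i = locally sorted initial array).\<close>
definition ms_run :: "nat \<Rightarrow> nat \<Rightarrow> nat \<Rightarrow> (nat \<Rightarrow> 'a::linorder list) \<Rightarrow>
                      (nat \<Rightarrow> nat \<Rightarrow> 'a list) \<Rightarrow> bool" where
  "ms_run k r v init conf \<longleftrightarrow>
     (\<forall>i<r ^ k. conf 0 i = sort (init i)) \<and>
     (\<forall>t\<in>{1..k}. \<forall>g<r ^ (t - 1).
        ms_group_step r v
          (map (\<lambda>i. conf (t - 1) (g * r ^ (k + 1 - t) + i)) [0..<r ^ (k + 1 - t)])
          (map (\<lambda>i. conf t (g * r ^ (k + 1 - t) + i)) [0..<r ^ (k + 1 - t)]))"

end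

theory Submission
  imports Defs
begin

(* Let a group of p' PEs hold N strings with sorted, pairwise distinct local arrays, and let
   w = N / (p' (v + 1)).  Between two consecutive samples of one PE lie at most w strings of
   that PE, and the part of the sorted sample array V between two consecutive splitters has
   at most |V| / r + 2 + p' elements, because a string occurs at most once among the samples
   of each PE.  Hence every bucket has at most w (|V| / r + 4 p') <= N / r + 4 N / (v + 1)
   strings: each level divides the group size by r up to a factor 1 + 4 r / (v + 1).  For
   v >= d k r these factors multiply over the k levels to at most (1 + 4 / (d k))^k <= exp (4 / d),
   so after level t a PE holds at most ceiling ((n / p) exp (4 / d)) strings.  This is O(n / p)
   since balanced inputs with n > 0 are nonempty on every PE, whence n >= p. *)

section \<open>Integer division\<close>

lemma mult_div_add_le:
  fixes L w m :: nat
  assumes "L \<le> w * m"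
  shows "(a + d) * L div m \<le> a * L div m + d * w"
proof (cases "m = 0")
  case False
  have "(a + d) * L \<le> a * L + d * w * m"
    using assms by (simp add: algebra_simps mult_left_mono)
  then have "(a + d) * L div m \<le> (a * L + d * w * m) div m"
    by (rule div_le_mono)
  also have "\<dots> = a * L div m + d * w"
    using False by simp
  finally show ?thesis .
qed simp

lemma add_div_le:
  fixes a b r :: nat
  shows "(a + b) div r \<le> a div r + b div r + 1"
proof (cases "r = 0")
  case False
  then have "a mod r < r" "b mod r < r" by simp_all
  then have "(a mod r + b mod r) div r < 2"
    using False by (simp only: div_less_iff_less_mult)
  then show ?thesis
    using div_add1_eq[of a b r] by linarith
qed simp

lemma mult_div_strict_mono:
  fixes a b c L :: nat
  assumes "c \<le> L" "0 < a" "a < b" "b \<le> c"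
  shows "a * L div (c + 1) < b * L div (c + 1)"
proof -
  have carry: "c + 1 \<le> L + a * L mod (c + 1)"
  proof (cases "L = c")
    case True
    have "\<not> (c + 1) dvd a * c"
    proof
      assume "(c + 1) dvd a * c"
      then have "(c + 1) dvd a" by (simp add: coprime_dvd_mult_left_iff)
      then show False using assms by (auto dest: dvd_imp_le)
    qed
    then show ?thesis using True by (simp add: dvd_eq_mod_eq_0)
  qed (use assms in simp)
  have "(a * L div (c + 1) + 1) * (c + 1) \<le> (a + 1) * L"
    using carry div_mult_mod_eq[of "a * L" "c + 1"] by (simp add: algebra_simps)
  then have "a * L div (c + 1) + 1 \<le> (a + 1) * L div (c + 1)"
    by (subst less_eq_div_iff_mult_less_eq) auto
  then have "a * L div (c + 1) < (a + 1) * L div (c + 1)"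
    by simp
  also have "\<dots> \<le> b * L div (c + 1)"
    using assms by (intro div_le_mono mult_le_mono1) simp
  finally show ?thesis .
qed

lemma le_mult_ceil_div:
  assumes "0 < b" shows "a \<le> b * ceil_div a b"
proof -
  have "(a + b - 1) div b * b + (a + b - 1) mod b = a + b - 1"
    by (rule div_mult_mod_eq)
  moreover have "(a + b - 1) mod b < b" using assms by simp
  ultimately have "a \<le> (a + b - 1) div b * b" by linarith
  then show ?thesis by (simp add: ceil_div_def mult.commute)
qed

lemma ceil_div_le:
  assumes "0 < b" shows "ceil_div a b \<le> a"
proof (cases "a = 0")
  case False
  have "a \<le> a * b" using assms by simp
  then have "a + b - 1 < a * b + b" using False by linarith
  then have "a + b - 1 < (a + 1) * b" by (simp add: algebra_simps)
  then show ?thesis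
    unfolding ceil_div_def using assms by (simp only: less_Suc_eq_le flip: div_less_iff_less_mult Suc_eq_plus1)
qed (use assms in \<open>simp add: ceil_div_def\<close>)

lemma ceil_div_minus_one_mult_le: "(ceil_div a b - 1) * b \<le> a"
proof -
  have "ceil_div a b * b \<le> a + b - 1"
    unfolding ceil_div_def by (rule div_times_less_eq_dividend)
  then show ?thesis by (simp add: algebra_simps)
qed

lemma ceil_div_le_ceiling:
  assumes "0 < b" "real a / real b \<le> x"
  shows "real (ceil_div a b) \<le> real_of_int \<lceil>x\<rceil>"
proof -
  have "ceil_div a b * b < a + b"
    using div_times_less_eq_dividend[of "a + b - 1" b] assms unfolding ceil_div_def by linarith
  then have "real (ceil_div a b) * real b < real a + real b"
    by (metis of_nat_add of_nat_less_iff of_nat_mult)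
  then have "real (ceil_div a b) < real a / real b + 1"
    using assms by (simp add: field_simps)
  then have "real_of_int (int (ceil_div a b)) < real_of_int (\<lceil>x\<rceil> + 1)"
    using assms(2) le_of_int_ceiling[of x] by (simp only: of_int_add of_int_1 of_int_of_nat_eq)
  then have "int (ceil_div a b) \<le> \<lceil>x\<rceil>"
    by (simp only: of_int_less_iff)
  then show ?thesis
    by (metis of_int_le_iff of_int_of_nat_eq)
qed

lemma sum_list_map_upt: "sum_list (map f [0..<n]) = (\<Sum>i<n. f i)"
  by (induction n) simp_all

lemma interval_length_le_grid_points:
  fixes f :: "nat \<Rightarrow> nat"
  assumes mono: "mono f" and f0: "f 0 = 0" and hi: "hi < f (Suc c)" and "lo \<le> hi"
    and step: "\<And>a d. f (a + d) \<le> f a + d * w"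
  shows "hi + 1 - lo \<le> (card {m. 1 \<le> m \<and> m \<le> c \<and> lo \<le> f m \<and> f m \<le> hi} + 1) * w"
proof -
  (* ms and mp are the first grid points beyond lo and beyond hi: the grid points
     ms, ..., mp - 1 lie in [lo, hi], while f (ms - 1) <= lo < hi < f mp. *)
  define ms where "ms = (LEAST m. lo < f m)"
  define mp where "mp = (LEAST m. hi < f m)"
  have lo_ms: "lo < f ms" unfolding ms_def using hi \<open>lo \<le> hi\<close> by (meson LeastI le_less_trans)
  have hi_mp: "hi < f mp" unfolding mp_def using hi by (rule LeastI)
  have mp_le: "mp \<le> Suc c" unfolding mp_def using hi by (rule Least_le)
  have ms_le_mp: "ms \<le> mp" unfolding ms_def using hi_mp \<open>lo \<le> hi\<close> by (simp add: Least_le)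
  have ms_pos: "0 < ms" using lo_ms f0 by (cases ms) auto
  have below_ms: "f (ms - 1) \<le> lo"
    using not_less_Least[of "ms - 1" "\<lambda>m. lo < f m"] ms_pos unfolding ms_def by simp
  have "{ms..<mp} \<subseteq> {m. 1 \<le> m \<and> m \<le> c \<and> lo \<le> f m \<and> f m \<le> hi}"
  proof
    fix m assume m: "m \<in> {ms..<mp}"
    have "f ms \<le> f m" using m mono by (simp add: monoD)
    moreover have "f m \<le> hi"
      using not_less_Least[of m "\<lambda>m. hi < f m"] m unfolding mp_def by simp
    ultimately show "m \<in> {m. 1 \<le> m \<and> m \<le> c \<and> lo \<le> f m \<and> f m \<le> hi}"
      using m ms_pos mp_le lo_ms by auto
  qed
  then have hits: "mp - ms \<le> card {m. 1 \<le> m \<and> m \<le> c \<and> lo \<le> f m \<and> f m \<le> hi}"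
    using card_mono[of _ "{ms..<mp}"] finite_subset[of _ "{..c}"] by fastforce
  have "hi < f (ms - 1 + (mp - ms + 1))"
    using hi_mp ms_pos ms_le_mp by simp
  also have "\<dots> \<le> f (ms - 1) + (mp - ms + 1) * w"
    by (rule step)
  also have "\<dots> \<le> lo + (card {m. 1 \<le> m \<and> m \<le> c \<and> lo \<le> f m \<and> f m \<le> hi} + 1) * w"
    using below_ms hits by (intro add_mono mult_le_mono1) auto
  finally show ?thesis by linarith
qed

section \<open>Evenly spaced samples\<close>

lemma length_even_samples [simp]: "length (even_samples xs c) = c"
  by (simp add: even_samples_def del: upt_Suc)

lemma length_filter_le_even_samples:
  fixes S :: "'a::linorder list"
  assumes sorted: "sorted S" and len: "length S \<le> w * (c + 1)"
    and convex: "\<And>a b z. P a \<Longrightarrow> P b \<Longrightarrow> a \<le> z \<Longrightarrow> z \<le> b \<Longrightarrow> P z"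
  shows "length (filter P S) \<le> (length (filter P (even_samples S c)) + 1) * w"
proof -
  define pos where "pos m = m * length S div (c + 1)" for m
  define K where "K = {i. i < length S \<and> P (S ! i)}"
  have samples: "length (filter P (even_samples S c)) = card {m. 1 \<le> m \<and> m \<le> c \<and> P (S ! pos m)}"
    unfolding even_samples_def pos_def
    by (subst length_filter_map, subst distinct_length_filter) (auto intro: arg_cong[where f=card])
  show ?thesis
  proof (cases "K = {}")
    case True
    then have "filter P S = []"
      by (auto simp: K_def filter_empty_conv in_set_conv_nth)
    then show ?thesis by simp
  next
    case False
    define lo where "lo = Min K"
    define hi where "hi = Max K"
    have finK: "finite K" by (simp add: K_def)
    have K_lo_hi: "lo \<in> K" "hi \<in> K" "K \<subseteq> {lo..hi}"
      using finK False by (auto simp: lo_def hi_def)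
    have "length (filter P S) \<le> hi + 1 - lo"
      using card_mono[OF _ K_lo_hi(3)] by (simp add: K_def length_filter_conv_card)
    also have "\<dots> \<le> (card {m. 1 \<le> m \<and> m \<le> c \<and> lo \<le> pos m \<and> pos m \<le> hi} + 1) * w"
    proof (rule interval_length_le_grid_points)
      show "mono pos" by (auto intro!: monoI div_le_mono simp: pos_def)
      have "pos (c + 1) = length S"
        unfolding pos_def by (rule nonzero_mult_div_cancel_left) simp
      then show "hi < pos (Suc c)" using K_lo_hi by (simp add: K_def)
      show "pos (a + d) \<le> pos a + d * w" for a d
        unfolding pos_def using mult_div_add_le[OF len] by simp
    qed (use K_lo_hi in \<open>auto simp: pos_def\<close>)
    also have "card {m. 1 \<le> m \<and> m \<le> c \<and> lo \<le> pos m \<and> pos m \<le> hi}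
             \<le> card {m. 1 \<le> m \<and> m \<le> c \<and> P (S ! pos m)}"
    proof (rule card_mono)
      show "{m. 1 \<le> m \<and> m \<le> c \<and> lo \<le> pos m \<and> pos m \<le> hi} \<subseteq> {m. 1 \<le> m \<and> m \<le> c \<and> P (S ! pos m)}"
      proof safe
        fix m assume "lo \<le> pos m" "pos m \<le> hi"
        moreover have "hi < length S" using K_lo_hi by (simp add: K_def)
        ultimately have "S ! lo \<le> S ! pos m" "S ! pos m \<le> S ! hi"
          by (auto intro: sorted_nth_mono[OF sorted])
        then show "P (S ! pos m)"
          using K_lo_hi convex by (auto simp: K_def)
      qed
    qed simp
    finally show ?thesis by (simp add: samples)
  qed
qed

lemma distinct_even_samples:
  assumes "distinct S" "c \<le> max 1 (length S)"
  shows "distinct (even_samples S c)"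
proof (cases "c \<le> 1")
  case True
  then show ?thesis by (auto simp: even_samples_def le_Suc_eq)
next
  case False
  then have "c \<le> length S" using assms(2) by simp
  have pos_inj: "inj_on (\<lambda>j. j * length S div (c + 1)) {1..<c + 1}"
  proof (rule linorder_inj_onI)
    fix x y assume "x < y" "x \<in> {1..<c + 1}" "y \<in> {1..<c + 1}"
    then show "x * length S div (c + 1) \<noteq> y * length S div (c + 1)"
      using mult_div_strict_mono[OF \<open>c \<le> length S\<close>, of x y] by simp
  qed auto
  have pos_less: "j * length S div (c + 1) < length S" if "j < c + 1" for j
  proof -
    have "j * length S < (c + 1) * length S"
      using that False \<open>c \<le> length S\<close> by (intro mult_strict_right_mono) auto
    then show ?thesis by (metis less_mult_imp_div_less mult.commute)
  qed
  have "inj_on ((!) S \<circ> (\<lambda>j. j * length S div (c + 1))) {1..<c + 1}"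
    using pos_inj by (rule comp_inj_on) (auto intro!: inj_on_nth assms(1) pos_less simp del: One_nat_def)
  then show ?thesis
    by (simp add: even_samples_def distinct_map comp_def del: upt_Suc)
qed

section \<open>Buckets of one level\<close>

definition in_bucket :: "nat \<Rightarrow> 'a::linorder list \<Rightarrow> nat \<Rightarrow> 'a \<Rightarrow> bool" where
  "in_bucket r V j s \<longleftrightarrow> (j = 0 \<or> splitter r V j < s) \<and> (j + 1 = r \<or> s \<le> splitter r V (j + 1))"

lemma bucket_eq_filter:
  "bucket r v Ss j = filter (in_bucket r (ms_samples Ss v) j) (concat Ss)"
  by (simp add: bucket_def Let_def in_bucket_def[abs_def] filter_concat)

lemma in_bucket_convex:
  "in_bucket r V j a \<Longrightarrow> in_bucket r V j b \<Longrightarrow> a \<le> z \<Longrightarrow> z \<le> b \<Longrightarrow> in_bucket r V j z"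
  unfolding in_bucket_def by auto

lemma count_mset_concat_le_length:
  assumes "\<forall>xs\<in>set xss. distinct xs"
  shows "count (mset (concat xss)) y \<le> length xss"
  using assms
proof (induction xss)
  case (Cons xs xss)
  then have "count (mset xs) y \<le> 1" by (simp add: distinct_count_atmost_1)
  then show ?case using Cons by simp
qed simp

lemma length_filter_in_bucket_le:
  fixes V :: "'a::linorder list"
  assumes sorted: "sorted V" and "j < r" and mult: "\<And>y. count (mset V) y \<le> q"
  shows "length (filter (in_bucket r V j) V) \<le> length V div r + 2 + q"
proof -
  define M where "M = length V"
  define lo where "lo = j * M div r"
  define hi where "hi = (j + 1) * M div r"
  define y where "y = V ! (hi - 1)"
  have "lo \<le> hi" "hi \<le> r * M div r"
    using \<open>j < r\<close> unfolding lo_def hi_def by (intro div_le_mono mult_le_mono1; simp)+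
  then have lo_hi: "lo \<le> hi" "hi \<le> M"
    using \<open>j < r\<close> by simp_all
  have hi_last: "hi = M" if "j + 1 = r"
    unfolding hi_def using that nonzero_mult_div_cancel_left[of "j + 1" M] by simp
  (* Apart from the positions between the two splitters, only copies of the upper splitter y
     can lie in the bucket. *)
  have "{i. i < M \<and> in_bucket r V j (V ! i)} \<subseteq> {lo..<hi + 1} \<union> {i. i < M \<and> V ! i = y}"
  proof (intro subsetI)
    fix i assume "i \<in> {i. i < M \<and> in_bucket r V j (V ! i)}"
    then have i: "i < M" "in_bucket r V j (V ! i)" by simp_all
    show "i \<in> {lo..<hi + 1} \<union> {i. i < M \<and> V ! i = y}"
    proof (cases "V ! i = y")
      case False
      have "lo \<le> i"
      proof (rule ccontr)
        assume "\<not> lo \<le> i"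
        then have "V ! i \<le> V ! (lo - 1)"
          using lo_hi i(1) by (intro sorted_nth_mono[OF sorted]) (auto simp: M_def)
        then show False
          using i(2) \<open>\<not> lo \<le> i\<close> by (auto simp: in_bucket_def splitter_def lo_def M_def)
      qed
      moreover have "i < hi + 1"
      proof (rule ccontr)
        assume "\<not> i < hi + 1"
        then have "y \<le> V ! i" "j + 1 \<noteq> r"
          using lo_hi i(1) hi_last by (auto simp: y_def M_def intro: sorted_nth_mono[OF sorted])
        then show False
          using i(2) False by (auto simp: in_bucket_def splitter_def y_def hi_def M_def)
      qed
      ultimately show ?thesis by simp
    qed (simp add: i)
  qed
  then have "length (filter (in_bucket r V j) V) \<le> card ({lo..<hi + 1} \<union> {i. i < M \<and> V ! i = y})"
    unfolding length_filter_conv_card M_def by (intro card_mono) auto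
  also have "\<dots> \<le> (hi + 1 - lo) + count (mset V) y"
    using card_Un_le[of "{lo..<hi + 1}" "{i. i < M \<and> V ! i = y}"]
    by (simp add: count_mset count_list_eq_length_filter length_filter_conv_card M_def eq_commute)
  also have "\<dots> \<le> M div r + 2 + q"
    using add_div_le[of "j * M" M r] mult[of y] by (simp add: lo_def hi_def algebra_simps)
  finally show ?thesis by (simp add: M_def)
qed

definition sample_count :: "'a list list \<Rightarrow> nat \<Rightarrow> nat \<Rightarrow> nat" where
  "sample_count Ss v i = base_count Ss v i +
     (if i < length Ss * (v + 1) - (\<Sum>i<length Ss. base_count Ss v i) then 1 else 0)"

lemma ms_samples_eq:
  "ms_samples Ss v =
     sort (concat (map (\<lambda>i. even_samples (Ss ! i) (sample_count Ss v i)) [0..<length Ss]))"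
  by (simp add: ms_samples_def sample_count_def)

lemma length_le_omega_mult_sample_count:
  assumes "0 < ms_omega Ss v"
  shows "length (Ss ! i) \<le> ms_omega Ss v * (sample_count Ss v i + 1)"
proof -
  have "length (Ss ! i) \<le> ms_omega Ss v * ceil_div (length (Ss ! i)) (ms_omega Ss v)"
    using assms by (rule le_mult_ceil_div)
  also have "\<dots> \<le> ms_omega Ss v * (sample_count Ss v i + 1)"
    by (intro mult_le_mono2) (simp add: sample_count_def base_count_def)
  finally show ?thesis .
qed

lemma sample_count_le:
  assumes "0 < ms_omega Ss v"
  shows "sample_count Ss v i \<le> max 1 (length (Ss ! i))"
proof -
  have "base_count Ss v i + 1 \<le> max 1 (length (Ss ! i))"
    using ceil_div_le[OF assms, of "length (Ss ! i)"] unfolding base_count_def by arith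
  moreover have "sample_count Ss v i \<le> base_count Ss v i + 1"
    unfolding sample_count_def by simp
  ultimately show ?thesis by linarith
qed

lemma sum_base_count_le:
  assumes "0 < ms_omega Ss v" and "length Ss * (v + 1) dvd sum_list (map length Ss)"
  shows "(\<Sum>i<length Ss. base_count Ss v i) \<le> length Ss * (v + 1)"
proof -
  define w where "w = ms_omega Ss v"
  have "(\<Sum>i<length Ss. base_count Ss v i) * w = (\<Sum>i<length Ss. base_count Ss v i * w)"
    by (simp add: sum_distrib_right)
  also have "\<dots> \<le> (\<Sum>i<length Ss. length (Ss ! i))"
    unfolding w_def base_count_def by (intro sum_mono ceil_div_minus_one_mult_le)
  also have "\<dots> = sum_list (map length Ss)"
    by (simp add: sum_list_sum_nth atLeast0LessThan)
  also have "\<dots> = length Ss * (v + 1) * w"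
    unfolding w_def ms_omega_def using assms(2) by (rule dvd_mult_div_cancel[symmetric])
  finally show ?thesis
    using assms(1) mult_le_cancel2 unfolding w_def by blast
qed

lemma length_ms_samples_le:
  assumes "0 < ms_omega Ss v" and "length Ss * (v + 1) dvd sum_list (map length Ss)"
  shows "length (ms_samples Ss v) \<le> length Ss * (v + 1)"
proof -
  define d where "d = length Ss * (v + 1) - (\<Sum>i<length Ss. base_count Ss v i)"
  have "length (ms_samples Ss v) = (\<Sum>i<length Ss. sample_count Ss v i)"
    by (simp add: ms_samples_eq length_concat map_map comp_def sum_list_map_upt)
  also have "\<dots> = (\<Sum>i<length Ss. base_count Ss v i) + card {i. i < length Ss \<and> i < d}"
    by (simp add: sample_count_def sum.distrib sum.If_cases Int_def d_def)
  also have "card {i. i < length Ss \<and> i < d} \<le> d"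
    using card_mono[of "{..<d}" "{i. i < length Ss \<and> i < d}"] by auto
  finally show ?thesis
    using sum_base_count_le[OF assms] by (simp add: d_def)
qed

lemma length_bucket_le_omega:
  fixes Ss :: "'a::linorder list list"
  assumes omega: "0 < ms_omega Ss v" and "j < r"
    and sorted_distinct: "\<forall>S\<in>set Ss. sorted S \<and> distinct S"
  shows "length (bucket r v Ss j)
           \<le> ms_omega Ss v * (length (ms_samples Ss v) div r + 2 + 2 * length Ss)"
proof -
  define w where "w = ms_omega Ss v"
  define p where "p = length Ss"
  define V where "V = ms_samples Ss v"
  define I where "I = in_bucket r V j"
  define smp where "smp i = even_samples (Ss ! i) (sample_count Ss v i)" for i
  have V_eq: "V = sort (concat (map smp [0..<p]))"
    by (simp add: V_def p_def smp_def[abs_def] ms_samples_eq)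
  have "length (bucket r v Ss j) = (\<Sum>i<p. length (filter I (Ss ! i)))"
    by (simp add: bucket_eq_filter I_def V_def p_def filter_concat length_concat
        sum_list_sum_nth atLeast0LessThan)
  also have "\<dots> \<le> (\<Sum>i<p. (length (filter I (smp i)) + 1) * w)"
  proof (intro sum_mono)
    fix i assume "i \<in> {..<p}"
    then have "sorted (Ss ! i)" using sorted_distinct by (simp add: p_def)
    then show "length (filter I (Ss ! i)) \<le> (length (filter I (smp i)) + 1) * w"
      unfolding smp_def I_def w_def
      by (rule length_filter_le_even_samples[OF _ length_le_omega_mult_sample_count[OF omega]])
        (rule in_bucket_convex)
  qed
  also have "\<dots> = w * (length (filter I V) + p)"
  proof -
    have "length (filter I V) = length (filter I (concat (map smp [0..<p])))"
      unfolding V_eq by (metis mset_filter mset_sort size_mset)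
    also have "\<dots> = (\<Sum>i<p. length (filter I (smp i)))"
      by (simp add: filter_concat length_concat map_map comp_def sum_list_map_upt)
    finally show ?thesis
      by (simp add: sum.distrib sum_distrib_left sum_distrib_right algebra_simps)
  qed
  also have "length (filter I V) \<le> length V div r + 2 + p"
    unfolding I_def
  proof (rule length_filter_in_bucket_le)
    show "sorted V" by (simp add: V_eq)
    show "j < r" by fact
    fix y
    have "count (mset V) y = count (mset (concat (map smp [0..<p]))) y"
      by (simp add: V_eq)
    also have "\<dots> \<le> length (map smp [0..<p])"
    proof (intro count_mset_concat_le_length ballI)
      fix xs assume "xs \<in> set (map smp [0..<p])"
      then obtain i where "i < p" "xs = smp i" by auto
      then show "distinct xs"
        using sorted_distinct sample_count_le[OF omega, of i]
        by (auto simp: smp_def p_def intro: distinct_even_samples)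
    qed
    finally show "count (mset V) y \<le> p" by simp
  qed
  finally show ?thesis
    by (simp add: w_def V_def p_def algebra_simps)
qed

lemma length_bucket_le:
  fixes Ss :: "'a::linorder list list"
  assumes "Ss \<noteq> []" "j < r"
    and dvd: "length Ss * (v + 1) dvd sum_list (map length Ss)"
    and sorted_distinct: "\<forall>S\<in>set Ss. sorted S \<and> distinct S"
  shows "real (length (bucket r v Ss j))
           \<le> real (sum_list (map length Ss)) / r * (1 + 4 * real r / (real v + 1))"
proof -
  define w where "w = ms_omega Ss v"
  define p where "p = length Ss"
  define M where "M = length (ms_samples Ss v)"
  have N: "sum_list (map length Ss) = p * (v + 1) * w"
    unfolding w_def p_def ms_omega_def using dvd by (rule dvd_mult_div_cancel[symmetric])
  show ?thesis
  proof (cases "w = 0")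
    case True
    have "length (bucket r v Ss j) \<le> length (concat Ss)"
      by (simp add: bucket_eq_filter)
    then show ?thesis using True N by (simp add: length_concat)
  next
    case False
    have "length (bucket r v Ss j) \<le> w * (M div r + 2 + 2 * p)"
      using length_bucket_le_omega[of Ss v j r] False assms by (simp add: w_def M_def p_def)
    also have "\<dots> \<le> w * (M div r + 4 * p)"
    proof -
      have "1 \<le> p" using \<open>Ss \<noteq> []\<close> by (simp add: p_def Suc_le_eq)
      then show ?thesis by (intro mult_le_mono2) linarith
    qed
    finally have "real (length (bucket r v Ss j)) \<le> real w * (real (M div r) + 4 * real p)"
      by (metis of_nat_add of_nat_le_iff of_nat_mult of_nat_numeral)
    moreover have "real (M div r) \<le> real p * (v + 1) / r"
    proof -
      have "M \<le> p * (v + 1)"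
        using length_ms_samples_le[of Ss v] False dvd by (simp add: w_def M_def p_def)
      then have "real M \<le> real (p * (v + 1))"
        by (simp only: of_nat_le_iff)
      then have "real M / r \<le> real p * (v + 1) / r"
        by (intro divide_right_mono) (simp_all add: algebra_simps)
      moreover have "real (M div r) \<le> real M / r"
        by (rule of_nat_div_le_of_nat)
      ultimately show ?thesis by linarith
    qed
    ultimately have "real (length (bucket r v Ss j)) \<le> real w * (real p * (v + 1) / r + 4 * real p)"
      by (smt (verit) mult_left_mono of_nat_0_le_iff)
    also have "\<dots> = real (sum_list (map length Ss)) / r * (1 + 4 * real r / (real v + 1))"
    proof -
      have "real w * (real p * x / r + 4 * real p) = real p * x * real w / r * (1 + 4 * r / x)"
        if "0 < x" for x :: real
        using that \<open>j < r\<close> by (simp add: field_simps)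
      from this[of "real v + 1"] show ?thesis
        by (simp add: N algebra_simps)
    qed
    finally show ?thesis .
  qed
qed

lemma ms_group_step_subgroup:
  fixes Ss Ss' :: "'a::linorder list list"
  assumes step: "ms_group_step r v Ss Ss'" and "Ss \<noteq> []" "j < r"
    and sorted: "\<forall>S\<in>set Ss. sorted S" and dist: "distinct (concat Ss)"
  defines "B \<equiv> map (\<lambda>q. Ss' ! (j * (length Ss div r) + q)) [0..<length Ss div r]"
  shows "\<forall>S\<in>set B. sorted S"
    and "distinct (concat B)"
    and "real (length (concat B))
           \<le> real (length (concat Ss)) / r * (1 + 4 * real r / (real v + 1))"
    and "\<forall>S\<in>set B. length S \<le> ceil_div (length (concat B)) (length Ss div r)"
proof -
  define L where "L = length (bucket r v Ss j)"
  have dvd: "length Ss * (v + 1) dvd sum_list (map length Ss)"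
    and mset_B: "mset (concat B) = mset (bucket r v Ss j)"
    and members: "\<forall>q<length Ss div r. sorted (B ! q) \<and> length (B ! q) \<in> {L div (length Ss div r), ceil_div L (length Ss div r)}"
    using step \<open>j < r\<close> by (auto simp: ms_group_step_def Let_def B_def L_def)
  show "\<forall>S\<in>set B. sorted S"
    using members by (auto simp: in_set_conv_nth B_def)
  have "distinct (bucket r v Ss j)"
    using dist by (simp add: bucket_eq_filter)
  then show "distinct (concat B)"
    using mset_B mset_eq_imp_distinct_iff by blast
  have len_B: "length (concat B) = L"
    unfolding L_def using mset_B by (rule mset_eq_length)
  have "\<forall>S\<in>set Ss. sorted S \<and> distinct S"
    using sorted dist by (simp add: distinct_concat_iff)
  then have "real L \<le> real (sum_list (map length Ss)) / r * (1 + 4 * real r / (real v + 1))"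
    unfolding L_def by (rule length_bucket_le[OF \<open>Ss \<noteq> []\<close> \<open>j < r\<close> dvd])
  then show "real (length (concat B))
           \<le> real (length (concat Ss)) / r * (1 + 4 * real r / (real v + 1))"
    unfolding len_B by (simp only: length_concat)
  have "L div (length Ss div r) \<le> ceil_div L (length Ss div r)"
    unfolding ceil_div_def by (cases "length Ss div r = 0") (simp_all add: div_le_mono)
  then show "\<forall>S\<in>set B. length S \<le> ceil_div (length (concat B)) (length Ss div r)"
    unfolding len_B using members by (auto simp: in_set_conv_nth B_def)
qed

section \<open>Multi-level runs\<close>

definition pe_block :: "(nat \<Rightarrow> 'a) \<Rightarrow> nat \<Rightarrow> nat \<Rightarrow> 'a list" where
  "pe_block f s g = map (\<lambda>i. f (g * s + i)) [0..<s]"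

lemma nth_pe_block: "q < s \<Longrightarrow> pe_block f s g ! q = f (g * s + q)"
  by (simp add: pe_block_def)

lemma pe_block_subblock:
  assumes "j < r"
  shows "map (\<lambda>q. pe_block f (r * s) g ! (j * s + q)) [0..<s] = pe_block f s (g * r + j)"
proof -
  have "j * s + q < r * s" if "q < s" for q
  proof -
    have "j * s + q < (j + 1) * s" using that by simp
    also have "\<dots> \<le> r * s" using assms by (intro mult_le_mono1) simp
    finally show ?thesis .
  qed
  then show ?thesis
    by (auto simp: pe_block_def algebra_simps)
qed

lemma ms_run_initial:
  "ms_run k r v init conf \<Longrightarrow> pe_block (conf 0) (r ^ k) 0 = map (\<lambda>i. sort (init i)) [0..<r ^ k]"
  by (simp add: ms_run_def pe_block_def)

lemma ms_run_step:
  assumes "ms_run k r v init conf" "t < k" "g < r ^ t"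
  shows "ms_group_step r v (pe_block (conf t) (r ^ (k - t)) g) (pe_block (conf (Suc t)) (r ^ (k - t)) g)"
proof -
  have "Suc t \<in> {1..k}" "g < r ^ (Suc t - 1)"
    using assms(2,3) by auto
  then have "ms_group_step r v
      (map (\<lambda>i. conf (Suc t - 1) (g * r ^ (k + 1 - Suc t) + i)) [0..<r ^ (k + 1 - Suc t)])
      (map (\<lambda>i. conf (Suc t) (g * r ^ (k + 1 - Suc t) + i)) [0..<r ^ (k + 1 - Suc t)])"
    using assms(1) unfolding ms_run_def by blast
  then show ?thesis
    by (simp add: pe_block_def)
qed

lemma ms_run_subgroup:
  fixes conf :: "nat \<Rightarrow> nat \<Rightarrow> 'a::linorder list"
  assumes run: "ms_run k r v init conf" and "0 < r" and "t < k" "g < r ^ Suc t"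
  defines "G \<equiv> pe_block (conf t) (r ^ (k - t)) (g div r)"
    and "B \<equiv> pe_block (conf (Suc t)) (r ^ (k - Suc t)) g"
  assumes sorted: "\<forall>S\<in>set G. sorted S" and dist: "distinct (concat G)"
  shows "\<forall>S\<in>set B. sorted S"
    and "distinct (concat B)"
    and "real (length (concat B))
           \<le> real (length (concat G)) / r * (1 + 4 * real r / (real v + 1))"
    and "\<forall>S\<in>set B. length S \<le> ceil_div (length (concat B)) (r ^ (k - Suc t))"
proof -
  define s where "s = r ^ (k - Suc t)"
  have "k - t = Suc (k - Suc t)"
    using \<open>t < k\<close> by simp
  then have rs: "r ^ (k - t) = r * s"
    by (simp add: s_def)
  have "g div r < r ^ t"
    using \<open>g < r ^ Suc t\<close> \<open>0 < r\<close> by (simp add: div_less_iff_less_mult mult.commute)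
  then have step: "ms_group_step r v G (pe_block (conf (Suc t)) (r * s) (g div r))"
    using ms_run_step[OF run \<open>t < k\<close>] by (simp add: G_def rs)
  have "G \<noteq> []" "length G div r = s"
    using \<open>0 < r\<close> by (auto simp: G_def pe_block_def rs s_def)
  moreover have "B = map (\<lambda>q. pe_block (conf (Suc t)) (r * s) (g div r) ! (g mod r * s + q)) [0..<s]"
    using pe_block_subblock[of "g mod r" r "conf (Suc t)" s "g div r"] \<open>0 < r\<close>
    by (simp add: B_def s_def)
  ultimately show "\<forall>S\<in>set B. sorted S"
    and "distinct (concat B)"
    and "real (length (concat B))
           \<le> real (length (concat G)) / r * (1 + 4 * real r / (real v + 1))"
    and "\<forall>S\<in>set B. length S \<le> ceil_div (length (concat B)) (r ^ (k - Suc t))"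
    using ms_group_step_subgroup[OF step \<open>G \<noteq> []\<close> _ sorted dist, of "g mod r"] \<open>0 < r\<close>
    by (simp_all add: s_def)
qed

lemma ms_run_group_invariant:
  fixes init :: "nat \<Rightarrow> 'a::linorder list"
  assumes run: "ms_run k r v init conf" and "0 < r"
    and dist: "distinct (concat (map init [0..<r ^ k]))"
    and "t \<le> k" "g < r ^ t"
  shows "(\<forall>S\<in>set (pe_block (conf t) (r ^ (k - t)) g). sorted S)
       \<and> distinct (concat (pe_block (conf t) (r ^ (k - t)) g))
       \<and> real (length (concat (pe_block (conf t) (r ^ (k - t)) g)))
           \<le> real (\<Sum>i<r ^ k. length (init i)) / r ^ t * (1 + 4 * real r / (real v + 1)) ^ t"
  using \<open>t \<le> k\<close> \<open>g < r ^ t\<close>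
proof (induction t arbitrary: g)
  case 0
  define P where "P = map (\<lambda>i. sort (init i)) [0..<r ^ k]"
  have mset_P: "mset (concat P) = mset (concat (map init [0..<r ^ k]))"
    by (simp add: P_def mset_concat map_map comp_def)
  have "distinct (concat P)"
    using dist mset_P mset_eq_imp_distinct_iff by blast
  moreover have "length (concat P) = (\<Sum>i<r ^ k. length (init i))"
    using mset_eq_length[OF mset_P] by (simp add: length_concat map_map comp_def sum_list_map_upt)
  moreover have "g = 0" "pe_block (conf 0) (r ^ k) 0 = P"
    using 0 ms_run_initial[OF run] by (simp_all add: P_def)
  ultimately show ?case
    by (simp add: P_def)
next
  case (Suc t)
  define E where "E = 1 + 4 * real r / (real v + 1)"
  define G where "G = pe_block (conf t) (r ^ (k - t)) (g div r)"
  have "g div r < r ^ t"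
    using Suc.prems(2) \<open>0 < r\<close> by (simp add: div_less_iff_less_mult mult.commute)
  then have G_sorted: "\<forall>S\<in>set G. sorted S" and G_dist: "distinct (concat G)"
    and G_len: "real (length (concat G)) \<le> real (\<Sum>i<r ^ k. length (init i)) / r ^ t * E ^ t"
    using Suc by (simp_all add: G_def E_def)
  have "0 \<le> E" by (simp add: E_def)
  then have "real (length (concat G)) / r * E
      \<le> real (\<Sum>i<r ^ k. length (init i)) / r ^ t * E ^ t / r * E"
    using G_len by (intro mult_right_mono divide_right_mono) simp_all
  also have "\<dots> = real (\<Sum>i<r ^ k. length (init i)) / r ^ Suc t * E ^ Suc t"
    using \<open>0 < r\<close> by (simp add: field_simps)
  finally have growth: "real (length (concat G)) / r * E
      \<le> real (\<Sum>i<r ^ k. length (init i)) / r ^ Suc t * E ^ Suc t" .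
  have "t < k" using Suc.prems(1) by simp
  note sub = ms_run_subgroup[OF run \<open>0 < r\<close> \<open>t < k\<close> Suc.prems(2),
      folded G_def E_def, OF G_sorted G_dist]
  show ?case
    using sub(1,2) order_trans[OF sub(3) growth] by (simp add: E_def)
qed

lemma ms_run_length_le:
  fixes init :: "nat \<Rightarrow> 'a::linorder list"
  assumes run: "ms_run k r v init conf" and "0 < r"
    and dist: "distinct (concat (map init [0..<r ^ k]))"
    and "0 < t" "t \<le> k" "i < r ^ k"
  shows "real (length (conf t i))
           \<le> real_of_int \<lceil>real (\<Sum>i<r ^ k. length (init i)) / r ^ k
                            * (1 + 4 * real r / (real v + 1)) ^ t\<rceil>"
proof -
  obtain u where t: "t = Suc u"
    using \<open>0 < t\<close> by (cases t) auto
  define n where "n = real (\<Sum>i<r ^ k. length (init i))"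
  define E where "E = 1 + 4 * real r / (real v + 1)"
  define s where "s = r ^ (k - t)"
  define g where "g = i div s"
  define B where "B = pe_block (conf t) s g"
  have "0 < s"
    using \<open>0 < r\<close> by (simp add: s_def)
  have rk: "r ^ k = r ^ t * s"
    using \<open>t \<le> k\<close> by (simp add: s_def flip: power_add)
  have "g < r ^ t"
    using \<open>i < r ^ k\<close> \<open>0 < s\<close> by (simp add: g_def rk div_less_iff_less_mult)
  have "conf t i = B ! (i mod s)"
    using \<open>0 < s\<close> by (simp add: B_def nth_pe_block g_def)
  then have member: "conf t i \<in> set B"
    using \<open>0 < s\<close> by (simp add: B_def pe_block_def)
  have "g div r < r ^ u"
    using \<open>g < r ^ t\<close> \<open>0 < r\<close> by (simp add: t div_less_iff_less_mult mult.commute)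
  moreover have "u \<le> k"
    using \<open>t \<le> k\<close> by (simp add: t)
  ultimately have "(\<forall>S\<in>set (pe_block (conf u) (r ^ (k - u)) (g div r)). sorted S)
      \<and> distinct (concat (pe_block (conf u) (r ^ (k - u)) (g div r)))"
    using ms_run_group_invariant[OF run \<open>0 < r\<close> dist] by blast
  then have "length (conf t i) \<le> ceil_div (length (concat B)) s"
    using ms_run_subgroup(4)[OF run \<open>0 < r\<close>, of u g] member \<open>t \<le> k\<close> \<open>g < r ^ t\<close>
    by (simp add: t B_def s_def)
  moreover have "real (length (concat B)) / s \<le> n / r ^ k * E ^ t"
  proof -
    have "real (length (concat B)) \<le> n / r ^ t * E ^ t"
      using ms_run_group_invariant[OF run \<open>0 < r\<close> dist \<open>t \<le> k\<close> \<open>g < r ^ t\<close>]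
      by (simp add: B_def s_def n_def E_def)
    then have "real (length (concat B)) / s \<le> n / r ^ t * E ^ t / s"
      by (rule divide_right_mono) simp
    also have "\<dots> = n / r ^ k * E ^ t"
      by (simp add: rk)
    finally show ?thesis .
  qed
  ultimately show ?thesis
    using ceil_div_le_ceiling[OF \<open>0 < s\<close>] by (smt (verit) of_nat_le_iff n_def E_def)
qed

lemma sampling_overhead_le_exp:
  fixes d :: real
  assumes "0 < d" "0 < k" "0 < r" "d * real k * real r \<le> real v" "t \<le> k"
  shows "(1 + 4 * real r / (real v + 1)) ^ t \<le> exp (4 / d)"
proof -
  have "0 < d * real k * real r" using assms by simp
  then have "4 * real r / (real v + 1) \<le> 4 * real r / (d * real k * real r)"
    using assms(4) by (intro divide_left_mono) auto
  also have "\<dots> = 4 / d / real k"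
    using assms(3) by simp
  finally have "(1 + 4 * real r / (real v + 1)) ^ t \<le> (1 + 4 / d / real k) ^ t"
    by (intro power_mono) auto
  also have "\<dots> \<le> (1 + 4 / d / real k) ^ k"
    using assms by (intro power_increasing) auto
  also have "\<dots> \<le> exp (4 / d)"
  proof (rule exp_ge_one_plus_x_over_n_power_n)
    show "- real k \<le> 4 / d" using assms(1) by (smt (verit) divide_pos_pos of_nat_0_le_iff)
  qed (use assms in simp)
  finally show ?thesis .
qed

lemma balanced_sum_eq_0_or_ge:
  fixes f :: "nat \<Rightarrow> nat" and c :: real
  assumes "0 < c" and balanced: "\<forall>i<m. c * real (\<Sum>i<m. f i) / real m \<le> real (f i)"
  shows "(\<Sum>i<m. f i) = 0 \<or> m \<le> (\<Sum>i<m. f i)"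
proof -
  define N where "N = (\<Sum>i<m. f i)"
  have "m \<le> N" if "N \<noteq> 0"
  proof -
    from that have "0 < m"
      by (auto simp: N_def intro: Nat.gr0I)
    then have "0 < c * real N / real m"
      using \<open>0 < c\<close> \<open>N \<noteq> 0\<close> by simp
    have "1 \<le> f i" if "i < m" for i
    proof -
      have "c * real N / real m \<le> real (f i)"
        using balanced that by (simp add: N_def)
      then have "0 < real (f i)"
        using \<open>0 < c * real N / real m\<close> by linarith
      then show ?thesis by simp
    qed
    then show "m \<le> N"
      using sum_bounded_below[of "{..<m}" 1 f] by (simp add: N_def)
  qed
  then show ?thesis
    unfolding N_def[symmetric] by blast
qed

lemma ms_run_length_le_exp:
  fixes init :: "nat \<Rightarrow> 'a::linorder list" and d :: real
  assumes run: "ms_run k r v init conf" and "0 < r" and "0 < d"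
    and dist: "distinct (concat (map init [0..<r ^ k]))"
    and v: "d * real k * real r \<le> real v"
    and "0 < t" "t \<le> k" "i < r ^ k"
    and total: "(\<Sum>i<r ^ k. length (init i)) = 0 \<or> r ^ k \<le> (\<Sum>i<r ^ k. length (init i))"
  shows "real (length (conf t i))
           \<le> (exp (4 / d) + 1) * real (\<Sum>i<r ^ k. length (init i)) / real (r ^ k)"
proof -
  define N where "N = (\<Sum>i<r ^ k. length (init i))"
  define x where "x = real N / real (r ^ k)"
  have "0 \<le> x"
    by (simp add: x_def)
  have "real (length (conf t i)) \<le> real_of_int \<lceil>x * (1 + 4 * real r / (real v + 1)) ^ t\<rceil>"
    using ms_run_length_le[OF run \<open>0 < r\<close> dist \<open>0 < t\<close> \<open>t \<le> k\<close> \<open>i < r ^ k\<close>]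
    by (simp add: x_def N_def)
  also have "\<dots> \<le> x * exp (4 / d) + x"
    using total unfolding N_def[symmetric]
  proof
    assume "r ^ k \<le> N"
    then have "1 \<le> x"
      using \<open>0 < r\<close> by (simp add: x_def)
    have "x * (1 + 4 * real r / (real v + 1)) ^ t \<le> x * exp (4 / d)"
      using sampling_overhead_le_exp[OF \<open>0 < d\<close> _ \<open>0 < r\<close> v \<open>t \<le> k\<close>] \<open>0 < t\<close> \<open>t \<le> k\<close> \<open>0 \<le> x\<close>
      by (intro mult_left_mono) auto
    then show ?thesis
      using \<open>1 \<le> x\<close> by linarith
  qed (simp add: x_def)
  also have "\<dots> = (exp (4 / d) + 1) * real N / real (r ^ k)"
    by (simp add: x_def algebra_simps add_divide_distrib)
  finally show ?thesis
    by (simp only: N_def)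
qed

theorem theorem3:
  fixes c1 c2 d1 d2 :: real
  assumes "0 < c1" and "c1 \<le> c2" and "0 < d1" and "d1 \<le> d2"
  shows "\<exists>C::real. \<forall>(k::nat) (r::nat) (v::nat) (n::nat)
            (init :: nat \<Rightarrow> 'a::linorder list) (conf :: nat \<Rightarrow> nat \<Rightarrow> 'a list).
     1 \<le> k \<longrightarrow> 1 \<le> r \<longrightarrow>
     n = (\<Sum>i<r ^ k. length (init i)) \<longrightarrow>
     (\<forall>i<r ^ k. c1 * real n / real (r ^ k) \<le> real (length (init i)) \<and>
                real (length (init i)) \<le> c2 * real n / real (r ^ k)) \<longrightarrow>
     distinct (concat (map init [0..<r ^ k])) \<longrightarrow>
     d1 * real k * real r \<le> real v \<longrightarrow> real v \<le> d2 * real k * real r \<longrightarrow>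
     ms_run k r v init conf \<longrightarrow>
     (\<forall>t\<le>k. \<forall>i<r ^ k. real (length (conf t i)) \<le> C * real n / real (r ^ k))"
proof -
  (* Only the lower bound d1 k r <= v enters; c1 serves to make n = 0 or n >= r^k. *)
  define C where "C = c2 + exp (4 / d1) + 1"
  show ?thesis
  proof (intro exI[of _ C] allI impI)
    fix k r v n :: nat and init :: "nat \<Rightarrow> 'a list" and conf :: "nat \<Rightarrow> nat \<Rightarrow> 'a list" and t i :: nat
    assume "1 \<le> k" "1 \<le> r" and n: "n = (\<Sum>i<r ^ k. length (init i))"
      and balanced: "\<forall>i<r ^ k. c1 * real n / real (r ^ k) \<le> real (length (init i)) \<and>
                        real (length (init i)) \<le> c2 * real n / real (r ^ k)"
      and dist: "distinct (concat (map init [0..<r ^ k]))"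
      and v: "d1 * real k * real r \<le> real v"
      and run: "ms_run k r v init conf" and "t \<le> k" "i < r ^ k"
    have "c2 \<le> C" "exp (4 / d1) + 1 \<le> C"
      using \<open>0 < c1\<close> \<open>c1 \<le> c2\<close> by (simp_all add: C_def add_pos_pos less_imp_le)
    show "real (length (conf t i)) \<le> C * real n / real (r ^ k)"
    proof (cases "t = 0")
      case True
      then have "real (length (conf t i)) \<le> c2 * real n / real (r ^ k)"
        using run balanced \<open>i < r ^ k\<close> by (simp add: ms_run_def)
      with \<open>c2 \<le> C\<close> show ?thesis
        by (smt (verit) divide_right_mono mult_right_mono of_nat_0_le_iff)
    next
      case False
      have "n = 0 \<or> r ^ k \<le> n"
        using balanced_sum_eq_0_or_ge[OF \<open>0 < c1\<close>, of "r ^ k" "\<lambda>i. length (init i)", folded n]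
          balanced by blast
      then have "real (length (conf t i)) \<le> (exp (4 / d1) + 1) * real n / real (r ^ k)"
        using ms_run_length_le_exp[OF run _ \<open>0 < d1\<close> dist v] False \<open>t \<le> k\<close> \<open>i < r ^ k\<close> \<open>1 \<le> r\<close>
        by (simp add: n)
      with \<open>exp (4 / d1) + 1 \<le> C\<close> show ?thesis
        by (smt (verit) divide_right_mono mult_right_mono of_nat_0_le_iff)
    qed
  qed
qed

end
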